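(* If $\tau$ is measurable and boundedly oscillating, then there exist $g\in C^\infty(\mathbb{R})$ vanishing on $(-\infty,0]$ with $g^{(n)}\in L^\infty(\mathbb{R})$ for all $n\in\mathbb{N}$, and $x_0$ such that $\tau(x)=\int_0^x g(y)\,\mathrm{d}y+O(1)$ for $x\in[x_0,\infty)$.
   Context: A function $\tau$ is boundedly oscillating if there is $\delta>0$ with $\limsup_{x\to\infty}\sup_{h\in[0,\delta]}|\tau(x+h)-\tau(x)|<\infty$. *)

theory Defs
  imports "HOL-Analysis.Analysis"
begin

definition boundedly_oscillating :: "(real \<Rightarrow> real) \<Rightarrow> bool" where
  "boundedly_oscillating \<tau> \<longleftrightarrow>
     (\<exists>\<delta>>0. Limsup at_top (\<lambda>x. SUP h\<in>{0..\<delta>}. ereal \<bar>\<tau> (x + h) - \<tau> x\<bar>) < \<infinity>)"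

definition smooth_real :: "(real \<Rightarrow> real) \<Rightarrow> bool" where
  "smooth_real g \<longleftrightarrow> (\<forall>n x. ((deriv ^^ n) g) differentiable (at x))"

definition Linfty_real :: "(real \<Rightarrow> real) \<Rightarrow> bool" where
  "Linfty_real f \<longleftrightarrow> f \<in> borel_measurable lebesgue \<and> (\<exists>C. AE x in lebesgue. \<bar>f x\<bar> \<le> C)"

end

theory Submission
  imports Defs
begin

text \<open>Bounded oscillation gives a bound \<open>M\<close> on \<open>\<bar>\<tau>(x + h) - \<tau>(x)\<bar>\<close> for \<open>h \<in> [0, 1]\<close> and large \<open>x\<close>.
  Sample \<open>\<tau>\<close> at the integers \<open>k \<ge> K\<close> and interpolate between consecutive samples with a
  fixed \<open>C\<^sup>\<infinity>\<close> step \<open>S\<close>, flat at \<open>0\<close> and \<open>1\<close>. The interpolant \<open>G\<close> is smooth, and on \<open>[k, k + 1]\<close>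
  its \<open>n\<close>-th derivative combines two shifted copies of the \<open>n\<close>-th derivative of \<open>S\<close> with coefficients
  that are increments of \<open>\<tau>\<close>, hence bounded by \<open>M\<close>. So \<open>g = G'\<close> has bounded derivatives of all
  orders, and \<open>\<integral>\<^sub>0\<^sup>x g = G(x)\<close> stays within \<open>O(1)\<close> of \<open>\<tau>(x)\<close>.\<close>

definition flat_exp :: "nat \<Rightarrow> real \<Rightarrow> real" where
  "flat_exp k x = (if x > 0 then (1 / x) ^ k * exp (- (1 / x)) else 0)"

lemma flat_exp_tendsto_0: "(flat_exp k \<longlongrightarrow> 0) (at_right 0)"
proof -
  have "\<forall>\<^sub>F t in at_top. t ^ k / exp t = flat_exp k (inverse t)"
    using eventually_gt_at_top[of "0::real"]
    by eventually_elim (simp add: flat_exp_def exp_minus field_simps)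
  with tendsto_power_div_exp_0 have "((\<lambda>t. flat_exp k (inverse t)) \<longlongrightarrow> 0) at_top"
    by (rule Lim_transform_eventually)
  then show ?thesis
    by (simp add: filterlim_at_right_to_top)
qed

lemma has_real_derivative_flat_exp:
  "(flat_exp k has_real_derivative (- real k * flat_exp (Suc k) x + flat_exp (Suc (Suc k)) x)) (at x)"
proof (cases x "0::real" rule: linorder_cases)
  case less
  have "((\<lambda>y. 0) has_real_derivative (- real k * flat_exp (Suc k) x + flat_exp (Suc (Suc k)) x)) (at x)"
    using less by (auto intro!: derivative_eq_intros simp: flat_exp_def)
  then show ?thesis
    by (rule has_field_derivative_transform_within_open[where S = "{..<0}"])
       (use less in \<open>auto simp: flat_exp_def\<close>)
next
  case greater
  have "((\<lambda>y. (1 / y) ^ k * exp (- (1 / y))) has_real_derivative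
          (- real k * flat_exp (Suc k) x + flat_exp (Suc (Suc k)) x)) (at x)"
    using greater
    by (auto intro!: derivative_eq_intros simp: flat_exp_def)
       (cases k; auto simp: field_simps power2_eq_square)
  then show ?thesis
    by (rule has_field_derivative_transform_within_open[where S = "{0<..}"])
       (use greater in \<open>auto simp: flat_exp_def\<close>)
next
  case equal
  have "\<forall>\<^sub>F h in at_left 0. (flat_exp k (0 + h) - flat_exp k 0) / h = 0"
    unfolding eventually_at_left_field by (rule exI[of _ "-1"]) (simp add: flat_exp_def)
  then have "((\<lambda>h. (flat_exp k (0 + h) - flat_exp k 0) / h) \<longlongrightarrow> 0) (at_left 0)"
    by (rule tendsto_eventually)
  moreover have "\<forall>\<^sub>F h in at_right 0. flat_exp (Suc k) h = (flat_exp k (0 + h) - flat_exp k 0) / h"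
    unfolding eventually_at_right_field by (rule exI[of _ 1]) (simp add: flat_exp_def)
  with flat_exp_tendsto_0
  have "((\<lambda>h. (flat_exp k (0 + h) - flat_exp k 0) / h) \<longlongrightarrow> 0) (at_right 0)"
    by (rule Lim_transform_eventually)
  ultimately have "((\<lambda>h. (flat_exp k (0 + h) - flat_exp k 0) / h) \<longlongrightarrow> 0) (at 0)"
    by (rule filterlim_split_at)
  then show ?thesis
    using equal by (simp add: DERIV_def flat_exp_def)
qed

text \<open>The functions generated from the \<open>flat_exp k\<close> by these closure rules are \<open>C\<^sup>\<infinity>\<close>
  because the class is closed under \<open>deriv\<close> (lemma \<open>smooth_class_deriv\<close>).\<close>
inductive smooth_class :: "(real \<Rightarrow> real) \<Rightarrow> bool" where
  smooth_class_flat_exp: "smooth_class (flat_exp k)"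
| smooth_class_const: "smooth_class (\<lambda>x. c)"
| smooth_class_add: "smooth_class f \<Longrightarrow> smooth_class g \<Longrightarrow> smooth_class (\<lambda>x. f x + g x)"
| smooth_class_mult: "smooth_class f \<Longrightarrow> smooth_class g \<Longrightarrow> smooth_class (\<lambda>x. f x * g x)"
| smooth_class_affine: "smooth_class f \<Longrightarrow> smooth_class (\<lambda>x. f (a * x + b))"
| smooth_class_inverse: "smooth_class f \<Longrightarrow> (\<And>x. f x \<noteq> 0) \<Longrightarrow> smooth_class (\<lambda>x. inverse (f x))"

lemma smooth_class_deriv:
  assumes "smooth_class f"
  shows "(\<forall>x. (f has_real_derivative deriv f x) (at x)) \<and> smooth_class (deriv f)"
  using assms
proof (induction rule: smooth_class.induct)
  case (smooth_class_flat_exp k)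
  let ?f' = "\<lambda>x. - real k * flat_exp (Suc k) x + flat_exp (Suc (Suc k)) x"
  have "deriv (flat_exp k) = ?f'"
    using has_real_derivative_flat_exp by (intro ext DERIV_imp_deriv)
  moreover have "smooth_class ?f'"
    by (intro smooth_class.intros)
  ultimately show ?case
    using has_real_derivative_flat_exp by simp
next
  case (smooth_class_const c)
  have "deriv (\<lambda>x. c) = (\<lambda>x. 0)"
    by (intro ext DERIV_imp_deriv DERIV_const)
  then show ?case
    by (auto intro: smooth_class.intros)
next
  case (smooth_class_add f g)
  have D: "((\<lambda>x. f x + g x) has_real_derivative (deriv f x + deriv g x)) (at x)" for x
    using smooth_class_add.IH by (auto intro: DERIV_add)
  then have "deriv (\<lambda>x. f x + g x) = (\<lambda>x. deriv f x + deriv g x)"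
    by (intro ext DERIV_imp_deriv)
  with D smooth_class_add.IH show ?case
    by (simp add: smooth_class.smooth_class_add)
next
  case (smooth_class_mult f g)
  have D: "((\<lambda>x. f x * g x) has_real_derivative (deriv f x * g x + f x * deriv g x)) (at x)" for x
    using smooth_class_mult.IH by (auto intro!: derivative_eq_intros)
  then have "deriv (\<lambda>x. f x * g x) = (\<lambda>x. deriv f x * g x + f x * deriv g x)"
    by (intro ext DERIV_imp_deriv)
  with D smooth_class_mult show ?case
    by (simp add: smooth_class.smooth_class_add smooth_class.smooth_class_mult)
next
  case (smooth_class_affine f a b)
  have D: "((\<lambda>x. f (a * x + b)) has_real_derivative (deriv f (a * x + b) * a)) (at x)" for x
    using smooth_class_affine.IH
    by (auto intro!: DERIV_chain2[where f = f] derivative_eq_intros)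
  then have "deriv (\<lambda>x. f (a * x + b)) = (\<lambda>x. deriv f (a * x + b) * a)"
    by (intro ext DERIV_imp_deriv)
  with D smooth_class_affine show ?case
    by (simp add: smooth_class.intros)
next
  case (smooth_class_inverse f)
  have D: "((\<lambda>x. inverse (f x)) has_real_derivative
             (- deriv f x * (inverse (f x) * inverse (f x)))) (at x)" for x
    using smooth_class_inverse by (auto intro!: derivative_eq_intros simp: power2_eq_square)
  then have "deriv (\<lambda>x. inverse (f x)) = (\<lambda>x. - deriv f x * (inverse (f x) * inverse (f x)))"
    by (intro ext DERIV_imp_deriv)
  moreover have "smooth_class (\<lambda>x. (-1) * deriv f x * (inverse (f x) * inverse (f x)))"
    using smooth_class_inverse by (intro smooth_class.intros) auto
  ultimately show ?case
    using D by simp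
qed

lemma smooth_class_higher_deriv: "smooth_class f \<Longrightarrow> smooth_class ((deriv ^^ n) f)"
  by (induction n) (auto dest: smooth_class_deriv)

lemma smooth_class_has_real_derivative:
  "smooth_class f \<Longrightarrow> (f has_real_derivative deriv f x) (at x)"
  using smooth_class_deriv by blast

lemma smooth_class_shift: "smooth_class f \<Longrightarrow> smooth_class (\<lambda>x. f (x - b))"
  using smooth_class_affine[of f 1 "- b"] by simp

lemma higher_deriv_const: "(deriv ^^ Suc n) (\<lambda>x. c) = (\<lambda>x. 0 :: real)"
proof (induction n)
  case 0
  show ?case
    by (auto intro!: DERIV_imp_deriv)
next
  case (Suc n)
  then show ?case
    by (simp del: funpow.simps add: funpow_Suc_right)
qed

lemma higher_deriv_add:
  assumes "smooth_class f" "smooth_class g"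
  shows "(deriv ^^ n) (\<lambda>x. f x + g x) = (\<lambda>x. (deriv ^^ n) f x + (deriv ^^ n) g x)"
proof (induction n)
  case (Suc n)
  have "deriv (\<lambda>x. (deriv ^^ n) f x + (deriv ^^ n) g x)
          = (\<lambda>x. (deriv ^^ Suc n) f x + (deriv ^^ Suc n) g x)"
    using assms[THEN smooth_class_higher_deriv, THEN smooth_class_has_real_derivative]
    by (intro ext DERIV_imp_deriv) (auto intro: DERIV_add)
  with Suc show ?case
    by simp
qed simp

lemma higher_deriv_cmult:
  assumes "smooth_class f"
  shows "(deriv ^^ n) (\<lambda>x. c * f x) = (\<lambda>x. c * (deriv ^^ n) f x)"
proof (induction n)
  case (Suc n)
  have "deriv (\<lambda>x. c * (deriv ^^ n) f x) = (\<lambda>x. c * (deriv ^^ Suc n) f x)"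
    using assms[THEN smooth_class_higher_deriv, THEN smooth_class_has_real_derivative]
    by (intro ext DERIV_imp_deriv) (auto intro: DERIV_cmult)
  with Suc show ?case
    by simp
qed simp

lemma higher_deriv_shift:
  assumes "smooth_class f"
  shows "(deriv ^^ n) (\<lambda>x. f (x - b)) = (\<lambda>x. (deriv ^^ n) f (x - b))"
proof (induction n)
  case (Suc n)
  have "deriv (\<lambda>x. (deriv ^^ n) f (x - b)) = (\<lambda>x. (deriv ^^ Suc n) f (x - b))"
  proof (intro ext DERIV_imp_deriv)
    fix x
    have "((deriv ^^ n) f has_real_derivative (deriv ^^ Suc n) f (x - b)) (at (x - b))"
      using assms by (simp add: smooth_class_has_real_derivative smooth_class_higher_deriv)
    moreover have "((\<lambda>x. x - b) has_real_derivative 1) (at x)"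
      by (auto intro!: derivative_eq_intros)
    ultimately show "((\<lambda>x. (deriv ^^ n) f (x - b)) has_real_derivative (deriv ^^ Suc n) f (x - b)) (at x)"
      using DERIV_chain2 by fastforce
  qed
  with Suc show ?case
    by simp
qed simp

lemma higher_deriv_differentiable_if_eq_on_open:
  assumes "open U" "\<And>y. y \<in> U \<Longrightarrow> f y = h y" "x \<in> U" "smooth_class h"
  shows "(deriv ^^ n) f differentiable (at x)"
proof -
  have "((deriv ^^ n) h has_real_derivative deriv ((deriv ^^ n) h) x) (at x)"
    using assms(4) by (intro smooth_class_has_real_derivative smooth_class_higher_deriv)
  moreover have "(deriv ^^ n) f y = (deriv ^^ n) h y" if "y \<in> U" for y
    using assms(1,2) that by (intro higher_deriv_cong_ev) (auto simp: eventually_nhds)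
  ultimately have "((deriv ^^ n) f has_real_derivative deriv ((deriv ^^ n) h) x) (at x)"
    using assms(1,3) by (auto intro: has_field_derivative_transform_within_open[where S = U])
  then show ?thesis
    using real_differentiable_def by blast
qed

definition smooth_step :: "real \<Rightarrow> real" where
  "smooth_step t = flat_exp 0 t / (flat_exp 0 t + flat_exp 0 (1 - t))"

lemma smooth_step_denominator_pos: "flat_exp 0 t + flat_exp 0 (1 - t) > 0"
  by (cases "t > 0") (auto simp: flat_exp_def add_pos_nonneg)

lemma smooth_class_smooth_step: "smooth_class smooth_step"
proof -
  have "smooth_class (\<lambda>t. flat_exp 0 t * inverse (flat_exp 0 ((- 1) * t + 1) + flat_exp 0 t))"
    using smooth_step_denominator_pos
    by (intro smooth_class.intros) (metis add.commute diff_conv_add_uminus less_irrefl mult_minus1)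
  then show ?thesis
    by (simp add: smooth_step_def[abs_def] divide_inverse add.commute)
qed

lemma smooth_step_eq_0: "t \<le> 0 \<Longrightarrow> smooth_step t = 0"
  by (simp add: smooth_step_def flat_exp_def)

lemma smooth_step_eq_1: "t \<ge> 1 \<Longrightarrow> smooth_step t = 1"
  by (simp add: smooth_step_def flat_exp_def)

lemma smooth_step_bounds: "0 \<le> smooth_step t \<and> smooth_step t \<le> 1"
  using smooth_step_denominator_pos[of t]
  by (auto simp: smooth_step_def divide_le_eq_1 flat_exp_def)

lemma higher_deriv_smooth_step_outside:
  assumes "t \<notin> {0..1}"
  shows "(deriv ^^ Suc n) smooth_step t = 0"
proof (cases "t < 0")
  case True
  then have "(deriv ^^ Suc n) smooth_step t = (deriv ^^ Suc n) (\<lambda>x. 0) t"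
    by (intro higher_deriv_cong_ev)
       (auto simp: eventually_nhds smooth_step_eq_0 intro!: exI[of _ "{..<0}"])
  then show ?thesis
    by (simp only: higher_deriv_const)
next
  case False
  with assms have "t > 1"
    by auto
  then have "(deriv ^^ Suc n) smooth_step t = (deriv ^^ Suc n) (\<lambda>x. 1) t"
    by (intro higher_deriv_cong_ev)
       (auto simp: eventually_nhds smooth_step_eq_1 intro!: exI[of _ "{1<..}"])
  then show ?thesis
    by (simp only: higher_deriv_const)
qed

lemma smooth_step_higher_deriv_bounded: "\<exists>B. \<forall>t. \<bar>(deriv ^^ n) smooth_step t\<bar> \<le> B"
proof (cases n)
  case 0
  then show ?thesis
    using smooth_step_bounds by (auto intro!: exI[of _ 1] abs_leI)
next
  case (Suc m)
  have "continuous_on {0..1} ((deriv ^^ n) smooth_step)"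
    using smooth_class_smooth_step[THEN smooth_class_higher_deriv, THEN smooth_class_has_real_derivative]
    by (intro continuous_at_imp_continuous_on ballI DERIV_isCont) blast
  then obtain B where B: "\<And>t. t \<in> {0..1} \<Longrightarrow> \<bar>(deriv ^^ n) smooth_step t\<bar> \<le> B"
    using compact_continuous_image[of "{0..1}"] compact_imp_bounded
    by (fastforce simp: bounded_iff)
  have "\<bar>(deriv ^^ n) smooth_step t\<bar> \<le> B" for t
    using B[of t] B[of 0] Suc higher_deriv_smooth_step_outside[of t m]
    by (cases "t \<in> {0..1}") auto
  then show ?thesis
    by blast
qed

lemma bounded_increments_extend:
  fixes \<tau> :: "real \<Rightarrow> real" and L :: real
  assumes "\<delta> > 0" and r: "\<And>x h. x \<ge> x1 \<Longrightarrow> h \<in> {0..\<delta>} \<Longrightarrow> \<bar>\<tau> (x + h) - \<tau> x\<bar> \<le> r"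
  defines "N \<equiv> nat \<lceil>L / \<delta>\<rceil> + 1"
  shows "\<forall>x\<ge>x1. \<forall>h\<in>{0..L}. \<bar>\<tau> (x + h) - \<tau> x\<bar> \<le> real N * r"
proof (intro allI impI ballI)
  fix x h
  assume x: "x \<ge> x1" and h: "h \<in> {0..L}"
  have iterate: "\<bar>\<tau> (y + real m * s) - \<tau> y\<bar> \<le> real m * r" if "y \<ge> x1" "s \<in> {0..\<delta>}" for m y s
  proof (induction m)
    case (Suc m)
    have "\<bar>\<tau> (y + real m * s + s) - \<tau> (y + real m * s)\<bar> \<le> r"
      using that by (intro r) (auto intro: add_increasing2)
    with Suc show ?case
      by (simp add: algebra_simps)
  qed simp
  have "real N > 0" "L \<le> real N * \<delta>"
    using \<open>\<delta> > 0\<close> by (auto simp: N_def pos_divide_le_eq[symmetric]) linarith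
  then have "h / real N \<in> {0..\<delta>}"
    using h by (auto simp: pos_divide_le_eq mult.commute)
  from iterate[OF x this, of N] \<open>real N > 0\<close> show "\<bar>\<tau> (x + h) - \<tau> x\<bar> \<le> real N * r"
    by simp
qed

lemma boundedly_oscillating_bounded_increments:
  assumes "boundedly_oscillating \<tau>"
  shows "\<exists>x1 M. \<forall>x\<ge>x1. \<forall>h\<in>{0..L}. \<bar>\<tau> (x + h) - \<tau> x\<bar> \<le> M"
proof -
  obtain \<delta> where "\<delta> > 0"
    and "Limsup at_top (\<lambda>x. SUP h\<in>{0..\<delta>}. ereal \<bar>\<tau> (x + h) - \<tau> x\<bar>) < \<infinity>"
    using assms unfolding boundedly_oscillating_def by blast
  then obtain r where "Limsup at_top (\<lambda>x. SUP h\<in>{0..\<delta>}. ereal \<bar>\<tau> (x + h) - \<tau> x\<bar>) < ereal r"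
    using ereal_dense2 by blast
  then have "\<forall>\<^sub>F x in at_top. (SUP h\<in>{0..\<delta>}. ereal \<bar>\<tau> (x + h) - \<tau> x\<bar>) < ereal r"
    by (rule Limsup_lessD)
  then obtain x1 where x1: "\<And>x. x \<ge> x1 \<Longrightarrow> (SUP h\<in>{0..\<delta>}. ereal \<bar>\<tau> (x + h) - \<tau> x\<bar>) < ereal r"
    unfolding eventually_at_top_linorder by blast
  have "\<bar>\<tau> (x + h) - \<tau> x\<bar> \<le> r" if "x \<ge> x1" "h \<in> {0..\<delta>}" for x h
    using SUP_lessD[OF x1[OF \<open>x \<ge> x1\<close>] \<open>h \<in> {0..\<delta>}\<close>] by simp
  with bounded_increments_extend[OF \<open>\<delta> > 0\<close>] show ?thesis
    by blast
qed

definition smooth_interpolant :: "(int \<Rightarrow> real) \<Rightarrow> real \<Rightarrow> real" where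
  "smooth_interpolant v x = v \<lfloor>x\<rfloor> + (v (\<lfloor>x\<rfloor> + 1) - v \<lfloor>x\<rfloor>) * smooth_step (x - of_int \<lfloor>x\<rfloor>)"

definition interpolant_piece :: "(int \<Rightarrow> real) \<Rightarrow> int \<Rightarrow> real \<Rightarrow> real" where
  "interpolant_piece v k y = v (k - 1) + (v k - v (k - 1)) * smooth_step (y - of_int (k - 1))
     + (v (k + 1) - v k) * smooth_step (y - of_int k)"

lemma smooth_interpolant_eq_piece:
  assumes "y \<in> {of_int k - 1<..<of_int k + 1}"
  shows "smooth_interpolant v y = interpolant_piece v k y"
proof (cases "y < of_int k")
  case True
  with assms have "\<lfloor>y\<rfloor> = k - 1"
    by (auto simp: floor_eq_iff)
  with True show ?thesis
    by (simp add: smooth_interpolant_def interpolant_piece_def smooth_step_eq_0)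
next
  case False
  with assms have "\<lfloor>y\<rfloor> = k"
    by (auto simp: floor_eq_iff)
  with False show ?thesis
    by (simp add: smooth_interpolant_def interpolant_piece_def smooth_step_eq_1)
qed

lemma smooth_class_interpolant_piece: "smooth_class (interpolant_piece v k)"
  unfolding interpolant_piece_def[abs_def]
  by (intro smooth_class.intros smooth_class_shift smooth_class_smooth_step)

lemma open_floor_neighbourhood: "x \<in> {of_int \<lfloor>x\<rfloor> - 1<..<of_int \<lfloor>x\<rfloor> + 1 :: real}"
  by simp linarith

lemma higher_deriv_smooth_interpolant:
  "(deriv ^^ n) (smooth_interpolant v) x = (deriv ^^ n) (interpolant_piece v \<lfloor>x\<rfloor>) x"
  using smooth_interpolant_eq_piece open_floor_neighbourhood
  by (intro higher_deriv_cong_ev) (auto simp: eventually_nhds intro!: exI[of _ "{of_int \<lfloor>x\<rfloor> - 1<..<of_int \<lfloor>x\<rfloor> + 1}"])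

lemma higher_deriv_interpolant_piece:
  "(deriv ^^ Suc n) (interpolant_piece v k) y =
     (v k - v (k - 1)) * (deriv ^^ Suc n) smooth_step (y - of_int (k - 1))
     + (v (k + 1) - v k) * (deriv ^^ Suc n) smooth_step (y - of_int k)"
proof -
  let ?a = "v k - v (k - 1)" and ?b = "v (k + 1) - v k"
  have shifted: "smooth_class (\<lambda>y. c * smooth_step (y - t))" for c t
    by (intro smooth_class.intros smooth_class_shift smooth_class_smooth_step)
  have scaled: "(deriv ^^ m) (\<lambda>y. c * smooth_step (y - t)) y = c * (deriv ^^ m) smooth_step (y - t)" for m c t
    using higher_deriv_cmult[OF smooth_class_shift, OF smooth_class_smooth_step]
      higher_deriv_shift[OF smooth_class_smooth_step] by simp
  have "(deriv ^^ Suc n) (interpolant_piece v k) y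
      = (deriv ^^ Suc n) (\<lambda>y. v (k - 1)) y
        + (deriv ^^ Suc n) (\<lambda>y. ?a * smooth_step (y - of_int (k - 1))) y
        + (deriv ^^ Suc n) (\<lambda>y. ?b * smooth_step (y - of_int k)) y"
    unfolding interpolant_piece_def[abs_def]
    by (simp only: higher_deriv_add[OF smooth_class.smooth_class_add] higher_deriv_add
        smooth_class.smooth_class_const shifted)
  then show ?thesis
    by (simp only: higher_deriv_const scaled)
qed

lemma smooth_interpolant_higher_deriv_differentiable:
  "(deriv ^^ n) (smooth_interpolant v) differentiable (at x)"
  using smooth_interpolant_eq_piece open_floor_neighbourhood smooth_class_interpolant_piece
  by (intro higher_deriv_differentiable_if_eq_on_open[where U = "{of_int \<lfloor>x\<rfloor> - 1<..<of_int \<lfloor>x\<rfloor> + 1}"]) auto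

lemma smooth_interpolant_higher_deriv_bounded:
  assumes "\<And>k. \<bar>v (k + 1) - v k\<bar> \<le> M"
  shows "\<exists>C. \<forall>x. \<bar>(deriv ^^ Suc n) (smooth_interpolant v) x\<bar> \<le> C"
proof -
  obtain B where B: "\<And>t. \<bar>(deriv ^^ Suc n) smooth_step t\<bar> \<le> B"
    using smooth_step_higher_deriv_bounded by blast
  have "\<bar>(deriv ^^ Suc n) (smooth_interpolant v) x\<bar> \<le> M * B + M * B" for x
  proof -
    have "\<bar>v \<lfloor>x\<rfloor> - v (\<lfloor>x\<rfloor> - 1)\<bar> \<le> M"
      using assms[of "\<lfloor>x\<rfloor> - 1"] by simp
    then show ?thesis
      unfolding higher_deriv_smooth_interpolant higher_deriv_interpolant_piece
      using assms[of "\<lfloor>x\<rfloor>"] B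
      by (intro abs_triangle_ineq[THEN order_trans] add_mono)
         (auto simp: abs_mult intro!: mult_mono order_trans[OF abs_ge_zero B])
  qed
  then show ?thesis
    by blast
qed

lemma smooth_interpolant_eq_0:
  assumes "\<And>k. k \<le> K \<Longrightarrow> v k = 0" and "x < of_int K"
  shows "smooth_interpolant v x = 0"
proof -
  have "\<lfloor>x\<rfloor> + 1 \<le> K"
    using assms(2) floor_less_iff[of x K] by linarith
  with assms(1) show ?thesis
    by (simp add: smooth_interpolant_def)
qed

lemma smooth_interpolant_dist_sample:
  "\<bar>smooth_interpolant v x - v \<lfloor>x\<rfloor>\<bar> \<le> \<bar>v (\<lfloor>x\<rfloor> + 1) - v \<lfloor>x\<rfloor>\<bar>"
  using smooth_step_bounds[of "x - of_int \<lfloor>x\<rfloor>"]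
  by (simp add: smooth_interpolant_def abs_mult mult_left_le)

lemma higher_deriv_deriv: "(deriv ^^ n) (deriv f) = (deriv ^^ Suc n) f"
  by (simp del: funpow.simps add: funpow_Suc_right)

lemma smooth_real_deriv_smooth_interpolant: "smooth_real (deriv (smooth_interpolant v))"
  unfolding smooth_real_def higher_deriv_deriv
  by (blast intro: smooth_interpolant_higher_deriv_differentiable)

lemma Linfty_real_if_continuous_bounded:
  assumes "continuous_on UNIV f" "\<And>x. \<bar>f x\<bar> \<le> C"
  shows "Linfty_real f"
  using assms borel_measurable_continuous_onI[OF assms(1)]
  unfolding Linfty_real_def by (auto simp: measurable_completion)

lemma Linfty_real_higher_deriv_smooth_interpolant:
  assumes "\<And>k. \<bar>v (k + 1) - v k\<bar> \<le> M"
  shows "Linfty_real ((deriv ^^ n) (deriv (smooth_interpolant v)))"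
proof -
  obtain C where "\<And>x. \<bar>(deriv ^^ Suc n) (smooth_interpolant v) x\<bar> \<le> C"
    using smooth_interpolant_higher_deriv_bounded[of v M, OF assms] by blast
  moreover have "continuous_on UNIV ((deriv ^^ Suc n) (smooth_interpolant v))"
    using smooth_interpolant_higher_deriv_differentiable
    by (intro continuous_at_imp_continuous_on ballI differentiable_imp_continuous_within)
  ultimately show ?thesis
    unfolding higher_deriv_deriv by (rule Linfty_real_if_continuous_bounded[rotated])
qed

lemma integral_deriv_smooth_interpolant:
  assumes "a \<le> b"
  shows "integral {a..b} (deriv (smooth_interpolant v)) = smooth_interpolant v b - smooth_interpolant v a"
proof -
  have "(smooth_interpolant v has_real_derivative deriv (smooth_interpolant v) x) (at x within {a..b})" for x
    using smooth_interpolant_higher_deriv_differentiable[of 0 v x]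
    by (simp add: DERIV_deriv_iff_real_differentiable has_field_derivative_at_within)
  then show ?thesis
    using assms
    by (intro integral_unique fundamental_theorem_of_calculus)
       (auto simp: has_real_derivative_iff_has_vector_derivative[symmetric])
qed

lemma deriv_smooth_interpolant_eq_0:
  assumes "\<And>k. k \<le> K \<Longrightarrow> v k = 0" and "x < of_int K"
  shows "deriv (smooth_interpolant v) x = 0"
proof -
  have "deriv (smooth_interpolant v) x = deriv (\<lambda>y. 0) x"
    using assms smooth_interpolant_eq_0
    by (intro deriv_cong_ev) (auto simp: eventually_nhds intro!: exI[of _ "{..<of_int K}"])
  then show ?thesis
    by simp
qed

definition anchored_samples :: "int \<Rightarrow> (real \<Rightarrow> real) \<Rightarrow> int \<Rightarrow> real" where
  "anchored_samples K \<tau> k = (if k \<ge> K then \<tau> (of_int k) - \<tau> (of_int K) else 0)"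

lemma anchored_samples_eq_0: "k \<le> K \<Longrightarrow> anchored_samples K \<tau> k = 0"
  by (simp add: anchored_samples_def)

lemma anchored_samples_increment_bound:
  assumes M: "\<forall>x\<ge>x1. \<forall>h\<in>{0..1}. \<bar>\<tau> (x + h) - \<tau> x\<bar> \<le> M" and "x1 \<le> of_int K"
  shows "\<bar>anchored_samples K \<tau> (k + 1) - anchored_samples K \<tau> k\<bar> \<le> M"
  using M[rule_format, of x1 0] M[rule_format, of "of_int k" 1] assms(2)
  by (cases "k + 1 = K") (auto simp: anchored_samples_def)

lemma smooth_interpolant_anchored_samples_close:
  assumes M: "\<forall>x\<ge>x1. \<forall>h\<in>{0..1}. \<bar>\<tau> (x + h) - \<tau> x\<bar> \<le> M" and "x1 \<le> of_int K" "of_int K \<le> x"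
  shows "\<bar>\<tau> x - smooth_interpolant (anchored_samples K \<tau>) x\<bar> \<le> 2 * M + \<bar>\<tau> (of_int K)\<bar>"
proof -
  have "K \<le> \<lfloor>x\<rfloor>"
    using assms(3) by (simp add: le_floor_iff)
  then have "\<bar>\<tau> x - \<tau> (of_int \<lfloor>x\<rfloor>)\<bar> \<le> M"
    using M[rule_format, of "of_int \<lfloor>x\<rfloor>" "x - of_int \<lfloor>x\<rfloor>"] assms(2) by simp linarith
  with \<open>K \<le> \<lfloor>x\<rfloor>\<close> show ?thesis
    using smooth_interpolant_dist_sample[of "anchored_samples K \<tau>" x]
      anchored_samples_increment_bound[OF assms(1,2), of "\<lfloor>x\<rfloor>"]
    by (simp add: anchored_samples_def)
qed

theorem proposition3p5:
  fixes \<tau> :: "real \<Rightarrow> real"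
  assumes "\<tau> \<in> borel_measurable lebesgue"
    and "boundedly_oscillating \<tau>"
  shows "\<exists>g :: real \<Rightarrow> real. smooth_real g \<and> (\<forall>x\<le>0. g x = 0)
           \<and> (\<forall>n. Linfty_real ((deriv ^^ n) g))
           \<and> (\<exists>x0 C. \<forall>x\<ge>x0. \<bar>\<tau> x - integral {0..x} g\<bar> \<le> C)"
proof -
  obtain x1 M where M: "\<forall>x\<ge>x1. \<forall>h\<in>{0..1}. \<bar>\<tau> (x + h) - \<tau> x\<bar> \<le> M"
    using boundedly_oscillating_bounded_increments[OF assms(2)] by blast
  define K where "K = max 1 \<lceil>x1\<rceil>"
  define G where "G = smooth_interpolant (anchored_samples K \<tau>)"
  have "K \<ge> 1" "x1 \<le> of_int K"
    unfolding K_def by linarith+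
  have "integral {0..x} (deriv G) = G x" if "x \<ge> 0" for x
    using that \<open>K \<ge> 1\<close> smooth_interpolant_eq_0[OF anchored_samples_eq_0, where x = 0 and K = K]
    by (simp add: G_def integral_deriv_smooth_interpolant)
  then have "\<forall>x\<ge>of_int K. \<bar>\<tau> x - integral {0..x} (deriv G)\<bar> \<le> 2 * M + \<bar>\<tau> (of_int K)\<bar>"
    using smooth_interpolant_anchored_samples_close[OF M \<open>x1 \<le> of_int K\<close>] \<open>K \<ge> 1\<close>
    by (simp add: G_def)
  moreover have "\<forall>x\<le>0. deriv G x = 0"
    using \<open>K \<ge> 1\<close> unfolding G_def
    by (auto intro: deriv_smooth_interpolant_eq_0[OF anchored_samples_eq_0])
  moreover have "Linfty_real ((deriv ^^ n) (deriv G))" for n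
    unfolding G_def
    using anchored_samples_increment_bound[OF M \<open>x1 \<le> of_int K\<close>]
    by (rule Linfty_real_higher_deriv_smooth_interpolant)
  ultimately show ?thesis
    using smooth_real_deriv_smooth_interpolant unfolding G_def by blast
qed

end
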